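(* Let $f:2^V\to\mathbb{R}_+$ be nonnegative, normalized ($f(\emptyset)=0$), supermodular and monotone, and let $r,k$ be integers with $1\le r\le k\le n-1$. Run batch-greedy augmenting: $T_0=\emptyset$, $t=\lfloor k/r\rfloor$; for $i=1,\dots,t$, let $\mathcal{R}_i$ be the set of $r$-element subsets of $V\setminus T_{i-1}$, choose $S_i\in\arg\max_{S\in\mathcal{R}_i}f(T_{i-1}\cup S)$ and set $T_i=T_{i-1}\cup S_i$. Then for any $t$ pairwise disjoint $r$-element subsets $U_1,\dots,U_t$ of $V$, $f(T_t)\ge\frac12\sum_{h=1}^t f(U_h)$.
   Context: $V$ is a finite set with $n=|V|$. Supermodular: $f(A)+f(B)\le f(A\cup B)+f(A\cap B)$; monotone: $f(B)\le f(A)$ for $B\subseteq A$. *)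

theory Defs
  imports Complex_Main
begin

definition supermodular_on :: "'a set \<Rightarrow> ('a set \<Rightarrow> real) \<Rightarrow> bool" where
  "supermodular_on V f \<longleftrightarrow>
     (\<forall>A B. A \<subseteq> V \<longrightarrow> B \<subseteq> V \<longrightarrow> f A + f B \<le> f (A \<union> B) + f (A \<inter> B))"

definition monotone_setfun_on :: "'a set \<Rightarrow> ('a set \<Rightarrow> real) \<Rightarrow> bool" where
  "monotone_setfun_on V f \<longleftrightarrow> (\<forall>A B. A \<subseteq> V \<longrightarrow> B \<subseteq> A \<longrightarrow> f B \<le> f A)"

definition r_subsets :: "'a set \<Rightarrow> nat \<Rightarrow> 'a set set" where
  "r_subsets X r = {S. S \<subseteq> X \<and> card S = r}"

definition batch_greedy :: "'a set \<Rightarrow> ('a set \<Rightarrow> real) \<Rightarrow> nat \<Rightarrow> nat \<Rightarrow> (nat \<Rightarrow> 'a set) \<Rightarrow> bool" where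
  "batch_greedy V f r t T \<longleftrightarrow> T 0 = {} \<and>
     (\<forall>i\<in>{1..t}. \<exists>S \<in> r_subsets (V - T (i - 1)) r.
        T i = T (i - 1) \<union> S \<and>
        (\<forall>S' \<in> r_subsets (V - T (i - 1)) r. f (T (i - 1) \<union> S') \<le> f (T (i - 1) \<union> S)))"

end

theory Submission
  imports Defs "HOL-Library.Disjoint_Sets"
begin

text \<open>In round \<open>i\<close> the greedy batch is at least as good as any \<open>r\<close>-set containing
  \<open>U\<^sub>i - T\<^sub>i\<^sub>-\<^sub>1\<close>, so supermodularity and monotonicity bound the gain
  \<open>f T\<^sub>i - f T\<^sub>i\<^sub>-\<^sub>1\<close> from below by \<open>f U\<^sub>i - f (U\<^sub>i \<inter> T\<^sub>t)\<close>. Summing the telescoping gains gives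
  \<open>f T\<^sub>t \<ge> \<Sum> f U\<^sub>i - \<Sum> f (U\<^sub>i \<inter> T\<^sub>t)\<close>. The sets \<open>U\<^sub>i \<inter> T\<^sub>t\<close> are disjoint subsets of \<open>T\<^sub>t\<close>,
  and a supermodular \<open>f\<close> with \<open>f {} = 0\<close> is superadditive on disjoint sets, so the last
  sum is at most \<open>f T\<^sub>t\<close>.\<close>

lemma supermodular_onD:
  "supermodular_on V f \<Longrightarrow> A \<subseteq> V \<Longrightarrow> B \<subseteq> V \<Longrightarrow> f A + f B \<le> f (A \<union> B) + f (A \<inter> B)"
  unfolding supermodular_on_def by blast

lemma monotone_setfun_onD:
  "monotone_setfun_on V f \<Longrightarrow> A \<subseteq> V \<Longrightarrow> B \<subseteq> A \<Longrightarrow> f B \<le> f A"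
  unfolding monotone_setfun_on_def by blast

lemma supermodular_on_sum_le_UNION:
  assumes "supermodular_on V f" "f {} = 0" "finite I"
    and "\<And>h. h \<in> I \<Longrightarrow> A h \<subseteq> V"
    and "disjoint_family_on A I"
  shows "(\<Sum>h\<in>I. f (A h)) \<le> f (\<Union>h\<in>I. A h)"
  using assms(3-5)
proof (induction I rule: finite_induct)
  case empty
  then show ?case using assms(2) by simp
next
  case (insert x I)
  have "disjoint_family_on A I"
    using subset_insertI insert.prems(2) by (rule disjoint_family_on_mono)
  then have IH: "(\<Sum>h\<in>I. f (A h)) \<le> f (\<Union>h\<in>I. A h)"
    using insert.IH insert.prems(1) by simp
  have disjoint: "A x \<inter> (\<Union>h\<in>I. A h) = {}"
    using insert.prems(2) insert.hyps(2) unfolding disjoint_family_on_def by fastforce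
  have "A x \<subseteq> V" "(\<Union>h\<in>I. A h) \<subseteq> V"
    using insert.prems(1) by auto
  then have "f (A x) + f (\<Union>h\<in>I. A h) \<le> f (A x \<union> (\<Union>h\<in>I. A h)) + f (A x \<inter> (\<Union>h\<in>I. A h))"
    by (rule supermodular_onD[OF assms(1)])
  then show ?case
    using IH disjoint insert.hyps assms(2) by simp
qed

lemma greedy_augment_gain:
  assumes "finite V" "supermodular_on V f" "monotone_setfun_on V f"
    and "X \<subseteq> V" "S \<in> r_subsets (V - X) r"
    and greedy: "\<And>S'. S' \<in> r_subsets (V - X) r \<Longrightarrow> f (X \<union> S') \<le> f (X \<union> S)"
    and "U \<subseteq> V" "card U \<le> r"
  shows "f X + f U \<le> f (X \<union> S) + f (X \<inter> U)"
proof -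
  have "finite U"
    using assms(1,7) by (rule finite_subset[rotated])
  then have "card (U - X) \<le> r"
    using assms(8) card_mono[of U "U - X"] by auto
  moreover have "r \<le> card (V - X)"
    using assms(1,5) card_mono[of "V - X" S] unfolding r_subsets_def by auto
  ultimately obtain Z where Z: "U - X \<subseteq> Z" "Z \<in> r_subsets (V - X) r"
    using exists_subset_between[of "U - X" r "V - X"] assms(1,7)
    unfolding r_subsets_def by auto
  have "f X + f U \<le> f (X \<union> U) + f (X \<inter> U)"
    using assms(2,4,7) by (rule supermodular_onD)
  also have "\<dots> \<le> f (X \<union> Z) + f (X \<inter> U)"
  proof -
    have "X \<union> U \<subseteq> X \<union> Z" "X \<union> Z \<subseteq> V"
      using Z assms(4) unfolding r_subsets_def by auto
    then show ?thesis
      using assms(3) by (simp add: monotone_setfun_onD)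
  qed
  also have "\<dots> \<le> f (X \<union> S) + f (X \<inter> U)"
    using greedy[OF Z(2)] by simp
  finally show ?thesis .
qed

lemma batch_greedy_step:
  assumes "batch_greedy V f r t T" "i < t"
  obtains S where "S \<in> r_subsets (V - T i) r" "T (Suc i) = T i \<union> S"
    "\<And>S'. S' \<in> r_subsets (V - T i) r \<Longrightarrow> f (T i \<union> S') \<le> f (T i \<union> S)"
proof -
  have "Suc i \<in> {1..t}"
    using assms(2) by simp
  then show ?thesis
    using assms(1) that unfolding batch_greedy_def by (metis diff_Suc_1)
qed

lemma batch_greedy_subset:
  assumes "batch_greedy V f r t T" "i \<le> t"
  shows "T i \<subseteq> V"
  using assms(2)
proof (induction i)
  case 0
  then show ?case using assms(1) by (simp add: batch_greedy_def)
next
  case (Suc i)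
  then have "i < t" "T i \<subseteq> V"
    by simp_all
  then obtain S where "S \<in> r_subsets (V - T i) r" "T (Suc i) = T i \<union> S"
    "\<And>S'. S' \<in> r_subsets (V - T i) r \<Longrightarrow> f (T i \<union> S') \<le> f (T i \<union> S)"
    using batch_greedy_step[OF assms(1)] by blast
  then show ?case
    using \<open>T i \<subseteq> V\<close> by (auto simp: r_subsets_def)
qed

lemma batch_greedy_mono:
  assumes "batch_greedy V f r t T" "i \<le> j" "j \<le> t"
  shows "T i \<subseteq> T j"
proof (rule lift_Suc_mono_le_ivl[of "{..<t}" T])
  fix n assume "n \<in> {..<t}"
  then have "n < t"
    by simp
  then obtain S where "S \<in> r_subsets (V - T n) r" "T (Suc n) = T n \<union> S"
    "\<And>S'. S' \<in> r_subsets (V - T n) r \<Longrightarrow> f (T n \<union> S') \<le> f (T n \<union> S)"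
    using batch_greedy_step[OF assms(1)] by blast
  then show "T n \<subseteq> T (Suc n)"
    by blast
qed (use assms(2,3) in auto)

lemma batch_greedy_round_gain:
  assumes "finite V" "supermodular_on V f" "monotone_setfun_on V f"
    and "batch_greedy V f r t T" "i < t"
    and "U \<subseteq> V" "card U \<le> r"
  shows "f U - f (U \<inter> T t) \<le> f (T (Suc i)) - f (T i)"
proof -
  obtain S where S: "S \<in> r_subsets (V - T i) r" "T (Suc i) = T i \<union> S"
    "\<And>S'. S' \<in> r_subsets (V - T i) r \<Longrightarrow> f (T i \<union> S') \<le> f (T i \<union> S)"
    using batch_greedy_step[OF assms(4,5)] by blast
  have "T i \<subseteq> V"
    using batch_greedy_subset[OF assms(4)] assms(5) by simp
  then have "f (T i) + f U \<le> f (T (Suc i)) + f (T i \<inter> U)"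
    using greedy_augment_gain[OF assms(1-3) _ S(1) S(3) assms(6,7)] S(2) by simp
  moreover have "f (T i \<inter> U) \<le> f (U \<inter> T t)"
  proof -
    have "T i \<subseteq> T t"
      using batch_greedy_mono[OF assms(4)] assms(5) by simp
    then have "T i \<inter> U \<subseteq> U \<inter> T t"
      by blast
    moreover have "U \<inter> T t \<subseteq> V"
      using assms(6) by blast
    ultimately show ?thesis
      using assms(3) by (simp add: monotone_setfun_onD)
  qed
  ultimately show ?thesis by linarith
qed

theorem batch_greedy_half_approximation:
  assumes "finite V" "f {} = 0" "supermodular_on V f" "monotone_setfun_on V f"
    and greedy: "batch_greedy V f r t T"
    and U: "\<And>h. h \<in> {1..t} \<Longrightarrow> U h \<subseteq> V" "\<And>h. h \<in> {1..t} \<Longrightarrow> card (U h) \<le> r"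
    and "disjoint_family_on U {1..t}"
  shows "(\<Sum>h = 1..t. f (U h)) \<le> 2 * f (T t)"
proof -
  have "(\<Sum>h = 1..t. f (U h) - f (U h \<inter> T t)) \<le> (\<Sum>h = 1..t. f (T h) - f (T (h - 1)))"
  proof (rule sum_mono)
    fix h assume h: "h \<in> {1..t}"
    then have "h - 1 < t" "Suc (h - 1) = h"
      by auto
    then show "f (U h) - f (U h \<inter> T t) \<le> f (T h) - f (T (h - 1))"
      using batch_greedy_round_gain[OF assms(1,3,4) greedy, of "h - 1" "U h"] U(1,2)[OF h]
      by simp
  qed
  also have "\<dots> = f (T t)"
    using sum_telescope''[of 0 t "\<lambda>h. f (T h)"] greedy assms(2)
    by (simp add: batch_greedy_def)
  finally have gains: "(\<Sum>h = 1..t. f (U h)) - (\<Sum>h = 1..t. f (U h \<inter> T t)) \<le> f (T t)"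
    by (simp add: sum_subtractf)
  have "(\<Sum>h = 1..t. f (U h \<inter> T t)) \<le> f (\<Union>h\<in>{1..t}. U h \<inter> T t)"
  proof (rule supermodular_on_sum_le_UNION[OF assms(3,2)])
    show "disjoint_family_on (\<lambda>h. U h \<inter> T t) {1..t}"
      using assms(8) unfolding disjoint_family_on_def by blast
  qed (use U(1) in auto)
  also have "\<dots> \<le> f (T t)"
    by (rule monotone_setfun_onD[OF assms(4) batch_greedy_subset[OF greedy order_refl]]) blast
  finally show ?thesis using gains by linarith
qed

theorem lemma2:
  fixes V :: "'a set" and f :: "'a set \<Rightarrow> real" and r k :: nat
    and T U :: "nat \<Rightarrow> 'a set"
  assumes "finite V"
    and "\<And>A. A \<subseteq> V \<Longrightarrow> f A \<ge> 0"
    and "f {} = 0"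
    and "supermodular_on V f"
    and "monotone_setfun_on V f"
    and "1 \<le> r" and "r \<le> k" and "k \<le> card V - 1"
    and "batch_greedy V f r (k div r) T"
    and "\<And>h. h \<in> {1..k div r} \<Longrightarrow> U h \<subseteq> V \<and> card (U h) = r"
    and "\<And>h h'. h \<in> {1..k div r} \<Longrightarrow> h' \<in> {1..k div r} \<Longrightarrow> h \<noteq> h' \<Longrightarrow> U h \<inter> U h' = {}"
  shows "f (T (k div r)) \<ge> (1/2) * (\<Sum>h = 1..k div r. f (U h))"
proof -
  \<comment> \<open>Nonnegativity follows from monotonicity and \<open>f {} = 0\<close>, and the bounds on \<open>r\<close> and
    \<open>k\<close> only guarantee that a greedy run exists.\<close>
  have "disjoint_family_on U {1..k div r}"
    using assms(11) unfolding disjoint_family_on_def by blast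
  then have "(\<Sum>h = 1..k div r. f (U h)) \<le> 2 * f (T (k div r))"
    using batch_greedy_half_approximation[OF assms(1,3,4,5,9)] assms(10) by simp
  then show ?thesis by simp
qed

end
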